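(* Let $E$ be a regular biordered set satisfying: (E1) there exists $0\in E$ with $0\,\omega\,e$ for every $e\in E$; (E2) there is a map $e\mapsto e'$ on $E$ such that for all $e,f\in E$: (i) $(e')'=e$; (ii) $f\,\omega^l\,e$ iff $e'\,\omega^r\,f'$; (iii) $f\,\omega^l\,e'$ iff $M(f,e)=\{0\}$. Then for each $e\in E$, the elements $\mathcal L(e)$ and $\mathcal L(e')$ are complements of each other in the lattice $L(E)=E/\mathcal L$.
   Context: A regular biordered set is a partial algebra isomorphic to the set of idempotents $E(S)$ of a regular semigroup $S$ (regular: every $x$ has $y$ with $xyx=x$), where $ef$ (computed in $S$) is defined when $\{ef,fe\}\cap\{e,f\}\ne\emptyset$. In $E$: $\omega^l=\{(e,f): ef=e\}$, $\omega^r=\{(e,f): fe=e\}$, $\omega=\omega^l\cap\omega^r$, $M(e,f)=\{g\in E: g\,\omega^l\,e,\ g\,\omega^r\,f\}$. $\mathcal L=\omega^l\cap(\omega^l)^{-1}$ with classes $\mathcal L(e)$; $E/\mathcal L$ is ordered by $\mathcal L(e)\le\mathcal L(f)$ iff $e\,\omega^l\,f$, and under (E1),(E2) it is a lattice with least element $\mathcal L(0)$ and greatest element $\mathcal L(1)$, where $1=0'$. Two elements $a,b$ are complements if $a\wedge b$ is the least element and $a\vee b$ the greatest element. *)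

theory Defs
  imports Main
begin

text \<open>A regular biordered set is (up to isomorphism) the set E(S) of idempotents of a
regular semigroup S, with the basic partial product inherited from S.\<close>

definition regular_semigroup :: "'a::semigroup_mult itself \<Rightarrow> bool" where
  "regular_semigroup _ \<longleftrightarrow> (\<forall>x::'a. \<exists>y. x * y * x = x)"

definition idem :: "'a::semigroup_mult set" where
  "idem = {e. e * e = e}"

definition omega_l :: "'a::semigroup_mult \<Rightarrow> 'a \<Rightarrow> bool" where
  "omega_l e f \<longleftrightarrow> e * f = e"

definition omega_r :: "'a::semigroup_mult \<Rightarrow> 'a \<Rightarrow> bool" where
  "omega_r e f \<longleftrightarrow> f * e = e"

definition omega :: "'a::semigroup_mult \<Rightarrow> 'a \<Rightarrow> bool" where
  "omega e f \<longleftrightarrow> omega_l e f \<and> omega_r e f"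

definition Mset :: "'a::semigroup_mult \<Rightarrow> 'a \<Rightarrow> 'a set" where
  "Mset e f = {g \<in> idem. omega_l g e \<and> omega_r g f}"

definition Lrel :: "'a::semigroup_mult \<Rightarrow> 'a \<Rightarrow> bool" where
  "Lrel e f \<longleftrightarrow> omega_l e f \<and> omega_l f e"

definition Lclass :: "'a::semigroup_mult \<Rightarrow> 'a set" where
  "Lclass e = {f \<in> idem. Lrel f e}"

definition LE :: "'a::semigroup_mult set set" where
  "LE = Lclass ` idem"

definition Lle :: "'a::semigroup_mult set \<Rightarrow> 'a set \<Rightarrow> bool" where
  "Lle A B \<longleftrightarrow> (\<exists>e\<in>idem. \<exists>f\<in>idem. A = Lclass e \<and> B = Lclass f \<and> omega_l e f)"

definition is_meet :: "('b \<Rightarrow> 'b \<Rightarrow> bool) \<Rightarrow> 'b set \<Rightarrow> 'b \<Rightarrow> 'b \<Rightarrow> 'b \<Rightarrow> bool" where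
  "is_meet R X a b m \<longleftrightarrow> m \<in> X \<and> R m a \<and> R m b \<and> (\<forall>z\<in>X. R z a \<and> R z b \<longrightarrow> R z m)"

definition is_join :: "('b \<Rightarrow> 'b \<Rightarrow> bool) \<Rightarrow> 'b set \<Rightarrow> 'b \<Rightarrow> 'b \<Rightarrow> 'b \<Rightarrow> bool" where
  "is_join R X a b j \<longleftrightarrow> j \<in> X \<and> R a j \<and> R b j \<and> (\<forall>z\<in>X. R a z \<and> R b z \<longrightarrow> R j z)"

definition is_least :: "('b \<Rightarrow> 'b \<Rightarrow> bool) \<Rightarrow> 'b set \<Rightarrow> 'b \<Rightarrow> bool" where
  "is_least R X m \<longleftrightarrow> m \<in> X \<and> (\<forall>z\<in>X. R m z)"

definition is_greatest :: "('b \<Rightarrow> 'b \<Rightarrow> bool) \<Rightarrow> 'b set \<Rightarrow> 'b \<Rightarrow> bool" where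
  "is_greatest R X m \<longleftrightarrow> m \<in> X \<and> (\<forall>z\<in>X. R z m)"

definition complements :: "('b \<Rightarrow> 'b \<Rightarrow> bool) \<Rightarrow> 'b set \<Rightarrow> 'b \<Rightarrow> 'b \<Rightarrow> bool" where
  "complements R X a b \<longleftrightarrow>
     (\<exists>m. is_meet R X a b m \<and> is_least R X m) \<and>
     (\<exists>j. is_join R X a b j \<and> is_greatest R X j)"

end

theory Submission
  imports Defs
begin

text \<open>Ordering the L-classes by \<open>\<omega>\<^sup>l\<close>, the class of \<open>0\<close> is the least element and the class
of \<open>0'\<close> the greatest one, because \<open>M(f, 0) = {0}\<close> for every \<open>f\<close>.  If \<open>h\<close> lies
\<open>\<omega>\<^sup>l\<close>-below both \<open>e\<close> and \<open>e'\<close>, then \<open>M(h, e) = {0}\<close> by (E2)(iii); since \<open>e h \<in> M(h, e)\<close>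
this forces \<open>h = h e h = h 0 = 0\<close>.  Upper bounds are handled dually: (E2)(ii) turns a common
upper bound \<open>f\<close> of \<open>e\<close> and \<open>e'\<close> into an element \<open>f'\<close> lying \<open>\<omega>\<^sup>r\<close>-below both, which the mirror
image of the same argument shows to be \<open>0\<close>; hence \<open>0' \<omega>\<^sup>l f\<close>.\<close>

lemma complements_if_least_greatest:
  assumes "a \<in> X" "b \<in> X" "is_least R X m" "is_greatest R X t"
    and "\<forall>x\<in>X. R x a \<and> R x b \<longrightarrow> R x m"
    and "\<forall>x\<in>X. R a x \<and> R b x \<longrightarrow> R t x"
  shows "complements R X a b"
  using assms unfolding complements_def is_meet_def is_join_def is_least_def is_greatest_def
  by blast

lemma omega_l_trans: "omega_l x y \<Longrightarrow> omega_l y w \<Longrightarrow> omega_l x w"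
  unfolding omega_l_def by (metis mult.assoc)

lemma self_in_Lclass: "x \<in> idem \<Longrightarrow> x \<in> Lclass x"
  by (simp add: Lclass_def Lrel_def omega_l_def idem_def)

lemma Lle_Lclass_iff:
  assumes "x \<in> idem" "y \<in> idem"
  shows "Lle (Lclass x) (Lclass y) \<longleftrightarrow> omega_l x y"
proof
  assume "Lle (Lclass x) (Lclass y)"
  then obtain x' y' where "y' \<in> idem" "Lclass x = Lclass x'" "Lclass y = Lclass y'" "omega_l x' y'"
    unfolding Lle_def by blast
  moreover have "x \<in> Lclass x" "y' \<in> Lclass y'"
    using assms \<open>y' \<in> idem\<close> self_in_Lclass by auto
  ultimately have "omega_l x x'" "omega_l y' y"
    by (auto simp: Lclass_def Lrel_def)
  then show "omega_l x y"
    using \<open>omega_l x' y'\<close> omega_l_trans by blast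
qed (use assms in \<open>auto simp: Lle_def\<close>)

lemma mult_in_Mset_of_omega_l:
  assumes e: "e \<in> idem" and h: "h \<in> idem" and "omega_l h e"
  shows "e * h \<in> Mset h e"
proof -
  have "e * h * (e * h) = e * (h * e) * h" by (simp add: mult.assoc)
  also have "\<dots> = e * h" using assms by (simp add: omega_l_def idem_def mult.assoc)
  moreover have "e * h * h = e * h" using h by (simp add: idem_def mult.assoc)
  moreover have "e * (e * h) = e * h" using e by (simp add: idem_def mult.assoc[symmetric])
  ultimately show ?thesis by (simp add: Mset_def idem_def omega_l_def omega_r_def)
qed

lemma mult_in_Mset_of_omega_r:
  assumes e: "e \<in> idem" and h: "h \<in> idem" and "omega_r h e"
  shows "h * e \<in> Mset e h"
proof -
  have "h * e * (h * e) = h * (e * h) * e" by (simp add: mult.assoc)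
  also have "\<dots> = h * e" using assms by (simp add: omega_r_def idem_def mult.assoc[symmetric])
  moreover have "h * e * e = h * e" using e by (simp add: idem_def mult.assoc)
  moreover have "h * (h * e) = h * e" using h by (simp add: idem_def mult.assoc[symmetric])
  ultimately show ?thesis by (simp add: Mset_def idem_def omega_l_def omega_r_def)
qed

locale biordered_zero_complement =
  fixes z :: "'a::semigroup_mult" and c :: "'a \<Rightarrow> 'a"
  assumes zero_idem: "z \<in> idem"
    and omega_zero: "f \<in> idem \<Longrightarrow> omega z f"
    and c_idem: "f \<in> idem \<Longrightarrow> c f \<in> idem"
    and c_c: "f \<in> idem \<Longrightarrow> c (c f) = f"
    and omega_l_iff_omega_r_c: "f \<in> idem \<Longrightarrow> g \<in> idem \<Longrightarrow> omega_l g f \<longleftrightarrow> omega_r (c f) (c g)"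
    and omega_l_c_iff_Mset: "f \<in> idem \<Longrightarrow> g \<in> idem \<Longrightarrow> omega_l g (c f) \<longleftrightarrow> Mset g f = {z}"
begin

lemma zero_mult: "f \<in> idem \<Longrightarrow> z * f = z"
  and mult_zero: "f \<in> idem \<Longrightarrow> f * z = z"
  using omega_zero by (auto simp: omega_def omega_l_def omega_r_def)

lemma Mset_zero:
  assumes "f \<in> idem"
  shows "Mset f z = {z}"
proof
  show "Mset f z \<subseteq> {z}"
    using zero_mult by (auto simp: Mset_def omega_r_def)
  show "{z} \<subseteq> Mset f z"
    using zero_idem zero_mult[OF assms] by (simp add: Mset_def omega_l_def omega_r_def idem_def)
qed

lemma omega_l_c_zero: "f \<in> idem \<Longrightarrow> omega_l f (c z)"
  using omega_l_c_iff_Mset zero_idem Mset_zero by blast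

lemma eq_zero_if_omega_l_both:
  assumes e: "e \<in> idem" and h: "h \<in> idem" and "omega_l h e" "omega_l h (c e)"
  shows "h = z"
proof -
  have "e * h \<in> Mset h e" using mult_in_Mset_of_omega_l e h \<open>omega_l h e\<close> .
  moreover have "Mset h e = {z}" using omega_l_c_iff_Mset e h \<open>omega_l h (c e)\<close> by blast
  ultimately have "e * h = z" by blast
  have "h = h * e * h" using h \<open>omega_l h e\<close> by (simp add: omega_l_def idem_def)
  also have "\<dots> = z" using \<open>e * h = z\<close> mult_zero h by (simp add: mult.assoc)
  finally show ?thesis .
qed

lemma eq_zero_if_omega_r_both:
  assumes e: "e \<in> idem" and h: "h \<in> idem" and "omega_r h e" "omega_r h (c e)"
  shows "h = z"
proof -
  have "omega_l e (c h)"
    using omega_l_iff_omega_r_c[OF c_idem[OF h] e] c_c h \<open>omega_r h (c e)\<close> by simp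
  then have "Mset e h = {z}" using omega_l_c_iff_Mset e h by blast
  moreover have "h * e \<in> Mset e h" using mult_in_Mset_of_omega_r e h \<open>omega_r h e\<close> .
  ultimately have "h * e = z" by blast
  have "h = h * (e * h)" using h \<open>omega_r h e\<close> by (simp add: omega_r_def idem_def)
  also have "\<dots> = z" using \<open>h * e = z\<close> zero_mult h by (simp add: mult.assoc[symmetric])
  finally show ?thesis .
qed

lemma omega_l_zero_if_lower_bound:
  "e \<in> idem \<Longrightarrow> h \<in> idem \<Longrightarrow> omega_l h e \<Longrightarrow> omega_l h (c e) \<Longrightarrow> omega_l h z"
  using eq_zero_if_omega_l_both zero_idem by (fastforce simp: omega_l_def idem_def)

lemma omega_l_c_zero_if_upper_bound:
  assumes e: "e \<in> idem" and f: "f \<in> idem" and "omega_l e f" "omega_l (c e) f"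
  shows "omega_l (c z) f"
proof -
  have "omega_r (c f) (c e)" using omega_l_iff_omega_r_c f e \<open>omega_l e f\<close> by blast
  moreover have "omega_r (c f) e"
    using omega_l_iff_omega_r_c[OF f c_idem[OF e]] c_c e \<open>omega_l (c e) f\<close> by simp
  ultimately have "c f = z" using eq_zero_if_omega_r_both e c_idem f by blast
  then have "omega_r (c f) (c (c z))"
    using c_c zero_idem by (simp add: omega_r_def idem_def)
  then show ?thesis using omega_l_iff_omega_r_c f c_idem zero_idem by blast
qed

lemma complements_Lclass_c:
  assumes e: "e \<in> idem"
  shows "complements Lle LE (Lclass e) (Lclass (c e))"
proof (rule complements_if_least_greatest)
  show "is_least Lle LE (Lclass z)"
    using zero_idem zero_mult by (auto simp: is_least_def LE_def Lle_Lclass_iff omega_l_def)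
  show "is_greatest Lle LE (Lclass (c z))"
    using c_idem zero_idem omega_l_c_zero by (auto simp: is_greatest_def LE_def Lle_Lclass_iff)
  show "\<forall>x\<in>LE. Lle x (Lclass e) \<and> Lle x (Lclass (c e)) \<longrightarrow> Lle x (Lclass z)"
    using e c_idem zero_idem omega_l_zero_if_lower_bound by (auto simp: LE_def Lle_Lclass_iff)
  show "\<forall>x\<in>LE. Lle (Lclass e) x \<and> Lle (Lclass (c e)) x \<longrightarrow> Lle (Lclass (c z)) x"
    using e c_idem zero_idem omega_l_c_zero_if_upper_bound by (auto simp: LE_def Lle_Lclass_iff)
qed (use e c_idem in \<open>auto simp: LE_def\<close>)

end

theorem corollary3p5:
  fixes z :: "'a::semigroup_mult" and c :: "'a \<Rightarrow> 'a" and e :: 'a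
  assumes reg: "regular_semigroup TYPE('a)"
    and E1: "z \<in> idem" "\<forall>f\<in>idem. omega z f"
    and E2_map: "\<forall>f\<in>idem. c f \<in> idem"
    and E2i: "\<forall>f\<in>idem. c (c f) = f"
    and E2ii: "\<forall>f\<in>idem. \<forall>g\<in>idem. omega_l g f \<longleftrightarrow> omega_r (c f) (c g)"
    and E2iii: "\<forall>f\<in>idem. \<forall>g\<in>idem. omega_l g (c f) \<longleftrightarrow> Mset g f = {z}"
    and e: "e \<in> idem"
  shows "complements Lle LE (Lclass e) (Lclass (c e))"
proof -
  interpret biordered_zero_complement z c
    using E1 E2_map E2i E2ii E2iii by unfold_locales auto
  show ?thesis using e by (rule complements_Lclass_c)
qed

end
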